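(* If $f\in H^2$ extends to be analytic on a neighborhood of $1$, then $U^*f(x)=\sum_{j=0}^\infty f^{(j)}(1)\frac{(\ln x)^j}{(j!)^2}$.
   Context: $H^2$ is the Hardy space of the unit disc $\mathbb{D}$, $k_\alpha(z)=\frac{1}{1-\bar\alpha z}$. The Sarason transform $U$ is the unique unitary operator from $L^2([0,1])$ onto $H^2$ with $U(x^n)=\frac{1}{n+1}k_{\frac{n}{n+1}}$ for integers $n\ge0$, and $U^*$ is its inverse. *)

theory Defs
  imports "HOL-Complex_Analysis.Complex_Analysis"
begin

text \<open>Hardy space H^2 of the unit disc: analytic functions on the disc whose Taylor
  coefficients at 0 are square summable (only the values on the disc matter).\<close>

definition taylor_coeff :: "(complex \<Rightarrow> complex) \<Rightarrow> nat \<Rightarrow> complex" where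
  "taylor_coeff f n = (deriv ^^ n) f 0 / of_nat (fact n)"

definition H2 :: "(complex \<Rightarrow> complex) set" where
  "H2 = {f. f holomorphic_on ball 0 1 \<and> summable (\<lambda>n. (cmod (taylor_coeff f n))\<^sup>2)}"

definition H2_norm :: "(complex \<Rightarrow> complex) \<Rightarrow> real" where
  "H2_norm f = sqrt (\<Sum>n. (cmod (taylor_coeff f n))\<^sup>2)"

definition kernel :: "complex \<Rightarrow> complex \<Rightarrow> complex" where
  "kernel \<alpha> z = 1 / (1 - cnj \<alpha> * z)"

definition L2 :: "(real \<Rightarrow> complex) set" where
  "L2 = {g. set_borel_measurable lborel {0..1} g \<and>
            set_integrable lborel {0..1} (\<lambda>x. (cmod (g x))\<^sup>2)}"

definition L2_norm :: "(real \<Rightarrow> complex) \<Rightarrow> real" where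
  "L2_norm g = sqrt (LINT x:{0..1}|lborel. (cmod (g x))\<^sup>2)"

text \<open>U is (a representative-level description of) the Sarason transform: a linear map
  L^2([0,1]) \<rightarrow> H^2, well defined on a.e.-classes, isometric and onto (i.e. unitary),
  with U(x^n) = 1/(n+1) k_{n/(n+1)}.  Equalities in H^2 are equalities on the disc.\<close>
definition is_sarason :: "((real \<Rightarrow> complex) \<Rightarrow> complex \<Rightarrow> complex) \<Rightarrow> bool" where
  "is_sarason U \<longleftrightarrow>
     (\<forall>g\<in>L2. U g \<in> H2) \<and>
     (\<forall>g\<in>L2. \<forall>h\<in>L2. \<forall>z\<in>ball 0 1. U (\<lambda>x. g x + h x) z = U g z + U h z) \<and>
     (\<forall>g\<in>L2. \<forall>c. \<forall>z\<in>ball 0 1. U (\<lambda>x. c * g x) z = c * U g z) \<and>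
     (\<forall>g\<in>L2. \<forall>h\<in>L2. (AE x in lborel. x \<in> {0..1} \<longrightarrow> g x = h x) \<longrightarrow>
                         (\<forall>z\<in>ball 0 1. U g z = U h z)) \<and>
     (\<forall>g\<in>L2. H2_norm (U g) = L2_norm g) \<and>
     (\<forall>f\<in>H2. \<exists>g\<in>L2. \<forall>z\<in>ball 0 1. U g z = f z) \<and>
     (\<forall>n::nat. \<forall>z\<in>ball 0 1.
        U (\<lambda>x. complex_of_real x ^ n) z
          = (1 / of_nat (n + 1)) * kernel (of_nat n / of_nat (n + 1)) z)"

end

theory Submission
  imports Defs "HOL-Real_Asymp.Real_Asymp"
begin

(* A function in L^2([0,1]) is determined almost everywhere by its moments of large order,
   since by Weierstrass approximation they control its integrals against all continuous
   functions. By unitarity of U and the reproducing property of the kernels,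
   int_0^1 g(x) x^n dx = <g, x^n> = <U g, U x^n> = f(n/(n+1)) / (n+1).
   The series h(x) = sum_j F^(j)(1) (ln x)^j / (j!)^2 has the same moments once 1/(n+1) is
   below the radius of convergence of F at 1: integrating termwise with
   int_0^1 x^n (ln x)^j dx = (-1)^j j! / (n+1)^(j+1) turns int_0^1 h(x) x^n dx into
   1/(n+1) times the Taylor series of F at 1, evaluated at n/(n+1). Hence g = h a.e. *)

section \<open>Logarithmic moments\<close>

(* Integration by parts: with L = -ln x, the integral of x^n L^(j+1) is
   x^(n+1) L^(j+1) / (n+1) + (j+1)/(n+1) times the integral of x^n L^j. *)
fun log_moment_primitive :: "nat \<Rightarrow> nat \<Rightarrow> real \<Rightarrow> real" where
  "log_moment_primitive n 0 x = x ^ Suc n / Suc n"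
| "log_moment_primitive n (Suc j) x =
     (x ^ Suc n * (- ln x) ^ Suc j + Suc j * log_moment_primitive n j x) / Suc n"

lemma has_real_derivative_power_mult_ln_power:
  fixes x :: real
  assumes "x > 0"
  shows "((\<lambda>x. x ^ Suc n * (- ln x) ^ Suc j) has_real_derivative
           Suc n * x ^ n * (- ln x) ^ Suc j - Suc j * x ^ n * (- ln x) ^ j) (at x)"
  by (rule DERIV_cong[OF DERIV_mult[OF DERIV_pow[of "Suc n"]
        DERIV_power[OF DERIV_minus[OF DERIV_ln[OF assms]], of "Suc j"]]])
     (use assms in \<open>simp add: field_simps\<close>)

lemma has_real_derivative_log_moment_primitive:
  fixes x :: real
  assumes "x > 0"
  shows "(log_moment_primitive n j has_real_derivative x ^ n * (- ln x) ^ j) (at x)"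
proof (induction j)
  case 0
  show ?case
    using DERIV_cdivide[OF DERIV_pow[of "Suc n" x UNIV], of "Suc n"] by simp
next
  case (Suc j)
  show ?case
    unfolding log_moment_primitive.simps(2)[abs_def]
    by (rule DERIV_cong[OF DERIV_cdivide[OF DERIV_add[OF
          has_real_derivative_power_mult_ln_power[OF assms] DERIV_cmult[OF Suc.IH]]]])
       (simp add: field_simps)
qed

lemma log_moment_primitive_tendsto_0: "(log_moment_primitive n j \<longlongrightarrow> 0) (at_right 0)"
proof (induction j)
  case (Suc j)
  have "((\<lambda>x::real. x ^ Suc n * (- ln x) ^ Suc j) \<longlongrightarrow> 0) (at_right 0)"
    by real_asymp
  from tendsto_add[OF this tendsto_mult[OF tendsto_const Suc.IH]]
  show ?case
    by (auto intro: tendsto_divide_zero)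
qed (auto intro!: tendsto_eq_intros)

lemma log_moment_primitive_1: "log_moment_primitive n j 1 = fact j / real (Suc n) ^ Suc j"
  by (induction j) (auto simp: field_simps)

lemma log_moment:
  shows set_integrable_log_moment: "set_integrable lborel {0..1} (\<lambda>x::real. x ^ n * (- ln x) ^ j)"
    and set_integral_log_moment:
      "(LINT x:{0..1}|lborel. x ^ n * (- ln x) ^ j) = fact j / real (Suc n) ^ Suc j"
proof -
  let ?P = "log_moment_primitive n j"
  have at_0: "((?P \<circ> real_of_ereal) \<longlongrightarrow> 0) (at_right 0)"
    using log_moment_primitive_tendsto_0 by (simp add: zero_ereal_def ereal_tendsto_simps)
  have at_1: "((?P \<circ> real_of_ereal) \<longlongrightarrow> ?P 1) (at_left 1)"
    using DERIV_isCont[OF has_real_derivative_log_moment_primitive[of 1]]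
    by (simp add: one_ereal_def ereal_tendsto_simps isCont_def Lim_at_imp_Lim_at_within)
  have FTC: "set_integrable lborel (einterval 0 1) (\<lambda>x::real. x ^ n * (- ln x) ^ j)"
    "(LBINT x=0..1. x ^ n * (- ln x) ^ j) = ?P 1 - 0"
    by (rule interval_integral_FTC_nonneg[OF _ _ _ _ at_0 at_1];
        auto simp: zero_ereal_def one_ereal_def
             intro!: has_real_derivative_log_moment_primitive isCont_mult isCont_power isCont_minus
                     isCont_ln)+
  have "einterval 0 1 = {0<..<(1::real)}"
    by (simp add: zero_ereal_def one_ereal_def)
  with FTC(1) show "set_integrable lborel {0..1} (\<lambda>x::real. x ^ n * (- ln x) ^ j)"
    by (subst set_integrable_discrete_difference[where X="{0,1}"]) auto
  show "(LINT x:{0..1}|lborel. x ^ n * (- ln x) ^ j) = fact j / real (Suc n) ^ Suc j"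
    using FTC(2)
    by (simp add: log_moment_primitive_1 interval_integral_Icc[symmetric]
                  zero_ereal_def[symmetric] one_ereal_def[symmetric])
qed

lemma ln_power_mult_power_moment:
  shows set_integrable_ln_power_mult_power: "set_integrable lborel {0..1} (\<lambda>x::real. ln x ^ j * x ^ n)"
    and set_integral_ln_power_mult_power:
      "(LINT x:{0..1}|lborel. ln x ^ j * x ^ n) = (- 1) ^ j * fact j / real (Suc n) ^ Suc j"
proof -
  have eq: "(\<lambda>x::real. ln x ^ j * x ^ n) = (\<lambda>x. (- 1) ^ j * (x ^ n * (- ln x) ^ j))"
    by (auto simp: power_minus[of "ln _"] mult_ac)
  show "set_integrable lborel {0..1} (\<lambda>x::real. ln x ^ j * x ^ n)"
    unfolding eq using set_integrable_log_moment by simp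
  show "(LINT x:{0..1}|lborel. ln x ^ j * x ^ n) = (- 1) ^ j * fact j / real (Suc n) ^ Suc j"
    unfolding eq by (simp add: set_integral_log_moment)
qed

section \<open>Functions on [0,1] are determined by their moments of large order\<close>

lemma emeasure_density_eq_set_integral:
  fixes f :: "real \<Rightarrow> real"
  assumes "integrable lborel f" and "\<And>x. 0 \<le> f x" and "A \<in> sets borel"
  shows "emeasure (density lborel f) A = ennreal (LINT x:A|lborel. f x)"
proof -
  have "emeasure (density lborel f) A = (\<integral>\<^sup>+x\<in>A. ennreal (f x) \<partial>lborel)"
    using assms by (subst emeasure_density) auto
  also have "\<dots> = ennreal (LINT x:A|lborel. f x)"
    using assms by (intro nn_set_integral_eq_set_integral) auto
  finally show ?thesis .
qed

lemma AE_eq_0_if_set_integral_Ioi_eq_0: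
  fixes \<psi> :: "real \<Rightarrow> real"
  assumes \<psi>: "integrable lborel \<psi>" and Ioi: "\<And>a. (LINT x:{a<..}|lborel. \<psi> x) = 0"
  shows "AE x in lborel. \<psi> x = 0"
proof -
  define P N where "P x = max 0 (\<psi> x)" and "N x = max 0 (- \<psi> x)" for x
  have [measurable]: "\<psi> \<in> borel_measurable lborel"
    using \<psi> by auto
  have P: "integrable lborel P" and N: "integrable lborel N"
    using \<psi> unfolding P_def N_def by auto
  have P_nonneg: "\<And>x. 0 \<le> P x" and N_nonneg: "\<And>x. 0 \<le> N x"
    by (simp_all add: P_def N_def)
  have "(LINT x:{a<..}|lborel. P x) = (LINT x:{a<..}|lborel. N x)" for a
  proof -
    have "set_integrable lborel {a<..} P" "set_integrable lborel {a<..} N"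
      using integrable_mult_indicator[OF _ P] integrable_mult_indicator[OF _ N]
      unfolding set_integrable_def by auto
    moreover have "\<psi> = (\<lambda>x. P x - N x)"
      by (auto simp: P_def N_def)
    ultimately show ?thesis
      using Ioi[of a] by simp
  qed
  then have densities_Ioi:
    "emeasure (density lborel P) {a<..} = emeasure (density lborel N) {a<..}" for a
    by (simp add: emeasure_density_eq_set_integral[OF P P_nonneg]
                  emeasure_density_eq_set_integral[OF N N_nonneg])
  have "density lborel P = density lborel N"
    by (rule measure_eqI_lessThan[OF _ _ _ densities_Ioi])
       (simp_all add: emeasure_density_eq_set_integral[OF P P_nonneg])
  then have "AE x in lborel. ennreal (P x) = ennreal (N x)"
    using P N by (subst (asm) sigma_finite_measure.density_unique_iff[OF sigma_finite_lborel]) auto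
  then show ?thesis
    by eventually_elim (auto simp: P_def N_def split: split_max)
qed

lemma AE_eq_0_if_set_integral_Ioi_eq_0_complex:
  fixes \<psi> :: "real \<Rightarrow> complex"
  assumes \<psi>: "integrable lborel \<psi>" and Ioi: "\<And>a. (LINT x:{a<..}|lborel. \<psi> x) = 0"
  shows "AE x in lborel. \<psi> x = 0"
proof -
  have "(LINT x:{a<..}|lborel. Re (\<psi> x)) = 0" "(LINT x:{a<..}|lborel. Im (\<psi> x)) = 0" for a
    using integral_Re[OF integrable_mult_indicator[OF _ \<psi>]]
          integral_Im[OF integrable_mult_indicator[OF _ \<psi>]] Ioi[of a]
    unfolding set_lebesgue_integral_def by auto
  then have "AE x in lborel. Re (\<psi> x) = 0" "AE x in lborel. Im (\<psi> x) = 0"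
    using \<psi> by (auto intro: AE_eq_0_if_set_integral_Ioi_eq_0)
  then show ?thesis
    by eventually_elim (simp add: complex_eq_iff)
qed

lemma ramp_tendsto_indicator_Ioi:
  fixes a x :: real
  shows "(\<lambda>k. min 1 (max 0 (real (Suc k) * (x - a)))) \<longlonglongrightarrow> indicator {a<..} x"
proof (cases "x \<le> a")
  case True
  then show ?thesis
    by (simp add: mult_nonneg_nonpos)
next
  case False
  obtain k0 where k0: "1 / (x - a) < real k0"
    using reals_Archimedean2 by blast
  have "min 1 (max 0 (real (Suc k) * (x - a))) = 1" if "k \<ge> k0" for k
  proof -
    have "1 / (x - a) < real (Suc k)"
      using k0 that by linarith
    then show ?thesis
      using False by (simp add: field_simps)
  qed
  then show ?thesis
    using False by (intro tendsto_eventually) (auto simp: eventually_sequentially)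
qed

lemma AE_eq_0_if_integral_continuous_eq_0:
  fixes \<psi> :: "real \<Rightarrow> complex"
  assumes \<psi>: "integrable lborel \<psi>"
    and continuous: "\<And>c. continuous_on UNIV c \<Longrightarrow> (\<And>x. 0 \<le> c x \<and> c x \<le> 1) \<Longrightarrow>
                       (\<integral>x. \<psi> x * of_real (c x) \<partial>lborel) = 0"
  shows "AE x in lborel. \<psi> x = 0"
proof (rule AE_eq_0_if_set_integral_Ioi_eq_0_complex[OF \<psi>])
  fix a :: real
  define c where "c k x = min 1 (max 0 (real (Suc k) * (x - a)))" for k x
  have c_cont: "continuous_on UNIV (c k)" for k
    unfolding c_def by (intro continuous_intros)
  have [measurable]: "c k \<in> borel_measurable borel" for k
    using c_cont by (rule borel_measurable_continuous_onI)
  have [measurable]: "\<psi> \<in> borel_measurable lborel"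
    using \<psi> by auto
  have "(\<lambda>k. \<integral>x. \<psi> x * of_real (c k x) \<partial>lborel) \<longlonglongrightarrow> (\<integral>x. \<psi> x * of_real (indicator {a<..} x) \<partial>lborel)"
  proof (rule integral_dominated_convergence[where w="\<lambda>x. norm (\<psi> x)"])
    show "AE x in lborel. (\<lambda>k. \<psi> x * of_real (c k x)) \<longlonglongrightarrow> \<psi> x * of_real (indicator {a<..} x)"
      unfolding c_def by (intro AE_I2 tendsto_mult tendsto_of_real tendsto_const ramp_tendsto_indicator_Ioi)
    show "AE x in lborel. norm (\<psi> x * of_real (c k x)) \<le> norm (\<psi> x)" for k
      by (intro AE_I2) (auto simp: c_def norm_mult mult_left_le)
  qed (use \<psi> in auto)
  moreover have "(\<integral>x. \<psi> x * of_real (c k x) \<partial>lborel) = 0" for k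
    using continuous[OF c_cont] by (simp add: c_def)
  ultimately have "(\<integral>x. \<psi> x * of_real (indicator {a<..} x) \<partial>lborel) = 0"
    by (simp add: LIMSEQ_const_iff)
  then show "(LINT x:{a<..}|lborel. \<psi> x) = 0"
    unfolding set_lebesgue_integral_def by (simp add: scaleR_conv_of_real mult.commute)
qed

lemma integrable_mult_continuous_if_vanishing_outside_compact:
  fixes \<psi> :: "real \<Rightarrow> complex"
  assumes \<psi>: "integrable lborel \<psi>" and "compact K" and outside: "\<And>x. x \<notin> K \<Longrightarrow> \<psi> x = 0"
    and c: "continuous_on UNIV c"
  shows "integrable lborel (\<lambda>x. \<psi> x * of_real (c x))"
proof -
  obtain B where B: "\<And>x. x \<in> K \<Longrightarrow> \<bar>c x\<bar> \<le> B"
    using compact_imp_bounded[OF compact_continuous_image[OF continuous_on_subset[OF c] \<open>compact K\<close>]]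
    by (auto simp: bounded_iff)
  have [measurable]: "c \<in> borel_measurable borel"
    using c by (rule borel_measurable_continuous_onI)
  have [measurable]: "\<psi> \<in> borel_measurable lborel"
    using \<psi> by auto
  have bound: "norm (\<psi> x * of_real (c x)) \<le> norm (B * norm (\<psi> x))" for x
  proof (cases "x \<in> K")
    case True
    then have "\<bar>c x\<bar> * norm (\<psi> x) \<le> \<bar>B\<bar> * norm (\<psi> x)"
      using B[of x] by (intro mult_right_mono) auto
    then show ?thesis
      by (simp add: norm_mult abs_mult mult.commute)
  qed (simp add: outside)
  show ?thesis
  proof (rule Bochner_Integration.integrable_bound[where f="\<lambda>x. B * norm (\<psi> x)"])
    show "integrable lborel (\<lambda>x. B * norm (\<psi> x))"
      using \<psi> by simp
  qed (use bound in auto)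
qed

lemma eq_0_if_norm_le_mult_all_pos:
  fixes x :: "'a::real_normed_vector"
  assumes "\<And>e. e > 0 \<Longrightarrow> norm x \<le> e * K"
  shows "x = 0"
proof -
  have "norm x \<le> 0 + d" if "d > 0" for d
  proof -
    have "norm x \<le> d / (\<bar>K\<bar> + 1) * K"
      using assms[of "d / (\<bar>K\<bar> + 1)"] that by (simp add: add_nonneg_pos)
    also have "\<dots> \<le> d / (\<bar>K\<bar> + 1) * (\<bar>K\<bar> + 1)"
      using that by (intro mult_left_mono) auto
    also have "\<dots> = d"
      by simp
    finally show ?thesis
      by simp
  qed
  then show ?thesis
    using field_le_epsilon[of "norm x" 0] by simp
qed

lemma integral_polynomial_eq_0_if_moments_eq_0:
  fixes \<psi> :: "real \<Rightarrow> complex"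
  assumes \<psi>: "integrable lborel \<psi>" and outside: "\<And>x. x \<notin> {0..1} \<Longrightarrow> \<psi> x = 0"
    and moments: "\<And>n. (\<integral>x. \<psi> x * of_real x ^ n \<partial>lborel) = 0"
    and p: "real_polynomial_function p"
  shows "(\<integral>x. \<psi> x * of_real (p x) \<partial>lborel) = 0"
proof -
  obtain a m where p_eq: "p = (\<lambda>x. \<Sum>i\<le>m. a i * x ^ i)"
    using p real_polynomial_function_iff_sum by blast
  have "(\<integral>x. \<psi> x * of_real (p x) \<partial>lborel) =
        (\<integral>x. (\<Sum>i\<le>m. of_real (a i) * (\<psi> x * of_real x ^ i)) \<partial>lborel)"
    unfolding p_eq by (simp add: sum_distrib_left mult_ac)
  also have "\<dots> = 0"
  proof -
    have "integrable lborel (\<lambda>x. \<psi> x * of_real (x ^ i))" for i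
      using \<psi> compact_Icc outside continuous_on_power[OF continuous_on_id]
      by (rule integrable_mult_continuous_if_vanishing_outside_compact)
    then show ?thesis
      using moments by simp
  qed
  finally show ?thesis .
qed

lemma integral_continuous_eq_0_if_moments_eq_0:
  fixes \<psi> :: "real \<Rightarrow> complex"
  assumes \<psi>: "integrable lborel \<psi>" and outside: "\<And>x. x \<notin> {0..1} \<Longrightarrow> \<psi> x = 0"
    and moments: "\<And>n. (\<integral>x. \<psi> x * of_real x ^ n \<partial>lborel) = 0"
    and c: "continuous_on UNIV c"
  shows "(\<integral>x. \<psi> x * of_real (c x) \<partial>lborel) = 0"
proof (rule eq_0_if_norm_le_mult_all_pos)
  fix e :: real
  assume "e > 0"
  have integrable: "integrable lborel (\<lambda>x. \<psi> x * of_real (h x))" if "continuous_on UNIV h" for h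
    using \<psi> compact_Icc outside that by (rule integrable_mult_continuous_if_vanishing_outside_compact)
  obtain p where p: "real_polynomial_function p" and cp: "\<And>x. x \<in> {0..1} \<Longrightarrow> \<bar>c x - p x\<bar> < e"
    using Stone_Weierstrass_real_polynomial_function[OF compact_Icc continuous_on_subset[OF c subset_UNIV] \<open>e > 0\<close>]
    by metis
  have p_cont: "continuous_on UNIV p"
    using p by (simp add: continuous_on_polymonial_function real_polynomial_function_eq)
  have "(\<integral>x. \<psi> x * of_real (c x) \<partial>lborel) =
        (\<integral>x. \<psi> x * of_real (c x) - \<psi> x * of_real (p x) \<partial>lborel)"
    using Bochner_Integration.integral_diff[OF integrable[OF c] integrable[OF p_cont]]
          integral_polynomial_eq_0_if_moments_eq_0[OF \<psi> outside moments p] by simp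
  also have "\<dots> = (\<integral>x. \<psi> x * of_real (c x - p x) \<partial>lborel)"
    by (simp add: right_diff_distrib)
  finally have c_eq: "(\<integral>x. \<psi> x * of_real (c x) \<partial>lborel) = (\<integral>x. \<psi> x * of_real (c x - p x) \<partial>lborel)" .
  have "norm (\<integral>x. \<psi> x * of_real (c x - p x) \<partial>lborel) \<le> (\<integral>x. e * norm (\<psi> x) \<partial>lborel)"
  proof (rule Bochner_Integration.integral_norm_bound_integral)
    show "integrable lborel (\<lambda>x. \<psi> x * of_real (c x - p x))"
      using integrable[OF continuous_on_diff[OF c p_cont]] by simp
    show "integrable lborel (\<lambda>x. e * norm (\<psi> x))"
      using \<psi> by simp
    show "norm (\<psi> x * of_real (c x - p x)) \<le> e * norm (\<psi> x)" for x
    proof (cases "x \<in> {0..1}")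
      case True
      then have "\<bar>c x - p x\<bar> * norm (\<psi> x) \<le> e * norm (\<psi> x)"
        using cp[of x] by (intro mult_right_mono) auto
      then show ?thesis
        by (simp add: norm_mult mult.commute flip: of_real_diff)
    qed (simp add: outside)
  qed
  then show "norm (\<integral>x. \<psi> x * of_real (c x) \<partial>lborel) \<le> e * (\<integral>x. norm (\<psi> x) \<partial>lborel)"
    by (simp add: c_eq)
qed

lemma AE_eq_0_if_moments_eq_0:
  fixes \<phi> :: "real \<Rightarrow> complex"
  assumes integrable: "set_integrable lborel {0..1} (\<lambda>x. \<phi> x * of_real x ^ N)"
    and moments: "\<And>n. n \<ge> N \<Longrightarrow> (LINT x:{0..1}|lborel. \<phi> x * of_real x ^ n) = 0"
  shows "AE x in lborel. x \<in> {0..1} \<longrightarrow> \<phi> x = 0"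
proof -
  define \<psi> where "\<psi> x = indicator {0..1} x *\<^sub>R (\<phi> x * of_real x ^ N)" for x
  have \<psi>: "integrable lborel \<psi>"
    using integrable unfolding set_integrable_def \<psi>_def .
  have outside: "\<psi> x = 0" if "x \<notin> {0..1}" for x
    using that by (simp add: \<psi>_def)
  have moments_\<psi>: "(\<integral>x. \<psi> x * of_real x ^ n \<partial>lborel) = 0" for n
  proof -
    have "(\<integral>x. \<psi> x * of_real x ^ n \<partial>lborel) = (LINT x:{0..1}|lborel. \<phi> x * of_real x ^ (N + n))"
      unfolding set_lebesgue_integral_def \<psi>_def by (simp add: power_add mult_ac)
    then show ?thesis
      using moments[of "N + n"] by simp
  qed
  have "AE x in lborel. \<psi> x = 0"
  proof (rule AE_eq_0_if_integral_continuous_eq_0[OF \<psi>])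
    fix c :: "real \<Rightarrow> real"
    assume "continuous_on UNIV c"
    with \<psi> outside moments_\<psi> show "(\<integral>x. \<psi> x * of_real (c x) \<partial>lborel) = 0"
      by (rule integral_continuous_eq_0_if_moments_eq_0)
  qed
  with AE_lborel_singleton[of 0] show ?thesis
  proof eventually_elim
    case (elim x)
    show ?case
    proof
      assume "x \<in> {0..1}"
      with elim have "\<phi> x * of_real x ^ N = 0"
        by (simp add: \<psi>_def)
      with elim show "\<phi> x = 0"
        by simp
    qed
  qed
qed

section \<open>Inner products in L^2([0,1]) and H^2\<close>

definition L2_inner :: "(real \<Rightarrow> complex) \<Rightarrow> (real \<Rightarrow> complex) \<Rightarrow> complex" where
  "L2_inner g h = (LINT x:{0..1}|lborel. g x * cnj (h x))"

definition H2_inner :: "(complex \<Rightarrow> complex) \<Rightarrow> (complex \<Rightarrow> complex) \<Rightarrow> complex" where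
  "H2_inner f g = (\<Sum>k. taylor_coeff f k * cnj (taylor_coeff g k))"

lemma cmod_add_mult_squared:
  "(cmod (a + c * b))\<^sup>2 = (cmod a)\<^sup>2 + (cmod c)\<^sup>2 * (cmod b)\<^sup>2 + 2 * Re (cnj c * (a * cnj b))"
  unfolding cmod_power2 by (simp add: algebra_simps power2_eq_square)

lemma cmod_mult_cnj_le: "cmod (a * cnj b) \<le> (cmod a)\<^sup>2 + (cmod b)\<^sup>2"
proof -
  have "cmod a * cmod b \<le> (cmod a)\<^sup>2 + (cmod b)\<^sup>2"
    using sum_squares_bound[of "cmod a" "cmod b"] mult_nonneg_nonneg[OF norm_ge_zero norm_ge_zero, of a b]
    by linarith
  then show ?thesis
    by (simp add: norm_mult)
qed

lemma complex_eqI_Re_cnj_mult: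
  assumes "\<And>c. Re (cnj c * x) = Re (cnj c * y)"
  shows "x = y"
  using assms[of 1] assms[of \<i>] by (simp add: complex_eq_iff)

lemma borel_measurable_cnj [measurable (raw)]:
  assumes "f \<in> borel_measurable M"
  shows "(\<lambda>x. cnj (f x)) \<in> borel_measurable M"
proof -
  have "cnj \<in> borel_measurable borel"
    by (intro borel_measurable_continuous_onI continuous_on_cnj continuous_on_id)
  from measurable_compose[OF assms this] show ?thesis
    by simp
qed

lemma L2_measurable: "g \<in> L2 \<Longrightarrow> (\<lambda>x. indicator {0..1} x *\<^sub>R g x) \<in> borel_measurable lborel"
  unfolding L2_def set_borel_measurable_def by auto

lemma L2_integrable_squared:
  "g \<in> L2 \<Longrightarrow> integrable lborel (\<lambda>x. indicator {0..1} x *\<^sub>R (cmod (g x))\<^sup>2)"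
  unfolding L2_def set_integrable_def by auto

lemma L2_norm_squared: "(L2_norm g)\<^sup>2 = (LINT x:{0..1}|lborel. (cmod (g x))\<^sup>2)"
proof -
  have "(LINT x:{0..1}|lborel. (cmod (g x))\<^sup>2) \<ge> 0"
    unfolding set_lebesgue_integral_def by (intro integral_nonneg_AE) auto
  then show ?thesis
    unfolding L2_norm_def by simp
qed

lemma L2_power: "(\<lambda>x. complex_of_real x ^ n) \<in> L2"
  unfolding L2_def set_borel_measurable_def set_integrable_def
proof (intro CollectI conjI)
  show "integrable lborel (\<lambda>x. indicator {0..1} x *\<^sub>R (cmod (complex_of_real x ^ n))\<^sup>2)"
    by (rule borel_integrable_compact) (auto intro!: continuous_intros)
qed measurable

lemma L2_set_integrable_mult_cnj:
  assumes g: "g \<in> L2" and h: "h \<in> L2"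
  shows "set_integrable lborel {0..1} (\<lambda>x. g x * cnj (h x))"
  unfolding set_integrable_def
proof (rule Bochner_Integration.integrable_bound)
  show "integrable lborel (\<lambda>x. indicator {0..1} x *\<^sub>R (cmod (g x))\<^sup>2 + indicator {0..1} x *\<^sub>R (cmod (h x))\<^sup>2)"
    using L2_integrable_squared[OF g] L2_integrable_squared[OF h] by simp
  have "(\<lambda>x. indicator {0..1} x *\<^sub>R (g x * cnj (h x))) =
        (\<lambda>x. (indicator {0..1} x *\<^sub>R g x) * cnj (indicator {0..1} x *\<^sub>R h x))"
    by (auto simp: indicator_def)
  also have "\<dots> \<in> borel_measurable lborel"
    using L2_measurable[OF g] L2_measurable[OF h] by measurable
  finally show "(\<lambda>x. indicator {0..1} x *\<^sub>R (g x * cnj (h x))) \<in> borel_measurable lborel" .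
  show "AE x in lborel. norm (indicator {0..1} x *\<^sub>R (g x * cnj (h x))) \<le>
      norm (indicator {0..1} x *\<^sub>R (cmod (g x))\<^sup>2 + indicator {0..1} x *\<^sub>R (cmod (h x))\<^sup>2)"
    by (intro AE_I2) (auto simp: indicator_def cmod_mult_cnj_le)
qed

lemma L2_expand_squared:
  fixes g h :: "real \<Rightarrow> complex"
  defines "I \<equiv> indicator {0..1} :: real \<Rightarrow> real"
  shows "I x *\<^sub>R (cmod (g x + c * h x))\<^sup>2 =
           I x *\<^sub>R (cmod (g x))\<^sup>2 + (cmod c)\<^sup>2 * (I x *\<^sub>R (cmod (h x))\<^sup>2)
           + 2 * Re (cnj c * (I x *\<^sub>R (g x * cnj (h x))))"
  by (simp add: I_def cmod_add_mult_squared indicator_def)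

lemma L2_integrable_Re_mult_cnj:
  assumes "g \<in> L2" and "h \<in> L2"
  shows "integrable lborel (\<lambda>x. 2 * Re (cnj c * (indicator {0..1} x *\<^sub>R (g x * cnj (h x)))))"
  using integrable_Re[OF Bochner_Integration.integrable_mult_right[OF
          L2_set_integrable_mult_cnj[OF assms, unfolded set_integrable_def], of "cnj c"]]
  by simp

lemma L2_add_mult:
  assumes g: "g \<in> L2" and h: "h \<in> L2"
  shows "(\<lambda>x. g x + c * h x) \<in> L2"
proof -
  have "(\<lambda>x. indicator {0..1} x *\<^sub>R (g x + c * h x)) =
        (\<lambda>x. indicator {0..1} x *\<^sub>R g x + c * (indicator {0..1} x *\<^sub>R h x))"
    by (auto simp: indicator_def)
  also have "\<dots> \<in> borel_measurable lborel"
    using L2_measurable[OF g] L2_measurable[OF h] by measurable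
  finally have "(\<lambda>x. indicator {0..1} x *\<^sub>R (g x + c * h x)) \<in> borel_measurable lborel" .
  moreover have "integrable lborel (\<lambda>x. indicator {0..1} x *\<^sub>R (cmod (g x + c * h x))\<^sup>2)"
    unfolding L2_expand_squared
    using L2_integrable_squared[OF g] L2_integrable_squared[OF h] L2_integrable_Re_mult_cnj[OF g h]
    by (intro Bochner_Integration.integrable_add) auto
  ultimately show ?thesis
    unfolding L2_def set_borel_measurable_def set_integrable_def by simp
qed

lemma L2_norm_add_mult_squared:
  assumes g: "g \<in> L2" and h: "h \<in> L2"
  shows "(L2_norm (\<lambda>x. g x + c * h x))\<^sup>2 =
           (L2_norm g)\<^sup>2 + (cmod c)\<^sup>2 * (L2_norm h)\<^sup>2 + 2 * Re (cnj c * L2_inner g h)"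
proof -
  let ?I = "indicator {0..1} :: real \<Rightarrow> real"
  have "(LINT x:{0..1}|lborel. (cmod (g x + c * h x))\<^sup>2) =
      (\<integral>x. ?I x *\<^sub>R (cmod (g x))\<^sup>2 \<partial>lborel) + (\<integral>x. (cmod c)\<^sup>2 * (?I x *\<^sub>R (cmod (h x))\<^sup>2) \<partial>lborel)
      + (\<integral>x. 2 * Re (cnj c * (?I x *\<^sub>R (g x * cnj (h x)))) \<partial>lborel)"
    unfolding set_lebesgue_integral_def L2_expand_squared
    using L2_integrable_squared[OF g] L2_integrable_squared[OF h] L2_integrable_Re_mult_cnj[OF g h]
    by simp
  also have "(\<integral>x. (cmod c)\<^sup>2 * (?I x *\<^sub>R (cmod (h x))\<^sup>2) \<partial>lborel) =
      (cmod c)\<^sup>2 * (LINT x:{0..1}|lborel. (cmod (h x))\<^sup>2)"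
    unfolding set_lebesgue_integral_def by simp
  also have "(\<integral>x. 2 * Re (cnj c * (?I x *\<^sub>R (g x * cnj (h x)))) \<partial>lborel) =
      2 * Re (\<integral>x. cnj c * (?I x *\<^sub>R (g x * cnj (h x))) \<partial>lborel)"
    using integral_Re[OF Bochner_Integration.integrable_mult_right[OF
            L2_set_integrable_mult_cnj[OF g h, unfolded set_integrable_def], of "cnj c"]]
    by simp
  also have "(\<integral>x. cnj c * (?I x *\<^sub>R (g x * cnj (h x))) \<partial>lborel) = cnj c * L2_inner g h"
    unfolding L2_inner_def set_lebesgue_integral_def by (rule integral_mult_right_zero)
  finally have "(LINT x:{0..1}|lborel. (cmod (g x + c * h x))\<^sup>2) =
      (LINT x:{0..1}|lborel. (cmod (g x))\<^sup>2) + (cmod c)\<^sup>2 * (LINT x:{0..1}|lborel. (cmod (h x))\<^sup>2)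
      + 2 * Re (cnj c * L2_inner g h)"
    unfolding set_lebesgue_integral_def .
  then show ?thesis
    by (simp add: L2_norm_squared)
qed

lemma L2_cmult: "h \<in> L2 \<Longrightarrow> (\<lambda>x. c * h x) \<in> L2"
  using L2_add_mult[of h h "c - 1"] by (simp add: algebra_simps)

lemma taylor_coeff_cong:
  assumes "\<forall>z\<in>ball 0 1. f z = g z"
  shows "taylor_coeff f n = taylor_coeff g n"
proof -
  have "\<forall>\<^sub>F z in nhds 0. f z = g z"
    using eventually_nhds_in_open[of "ball 0 1" 0] by (rule eventually_mono) (use assms in auto)
  then show ?thesis
    unfolding taylor_coeff_def by (simp add: higher_deriv_cong_ev)
qed

lemma taylor_coeff_add_mult:
  assumes "f holomorphic_on ball 0 1" and "g holomorphic_on ball 0 1"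
  shows "taylor_coeff (\<lambda>z. f z + c * g z) n = taylor_coeff f n + c * taylor_coeff g n"
proof -
  have "(deriv ^^ n) (\<lambda>z. f z + c * g z) 0 = (deriv ^^ n) f 0 + (deriv ^^ n) (\<lambda>z. c * g z) 0"
    using assms by (intro higher_deriv_add) (auto intro!: holomorphic_intros)
  also have "(deriv ^^ n) (\<lambda>z. c * g z) 0 = c * (deriv ^^ n) g 0"
    using assms by (intro higher_deriv_cmult) auto
  finally show ?thesis
    unfolding taylor_coeff_def by (simp add: add_divide_distrib)
qed

lemma H2_holomorphic: "f \<in> H2 \<Longrightarrow> f holomorphic_on ball 0 1"
  unfolding H2_def by simp

lemma H2_summable: "f \<in> H2 \<Longrightarrow> summable (\<lambda>k. (cmod (taylor_coeff f k))\<^sup>2)"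
  unfolding H2_def by simp

lemma H2_sums: "f \<in> H2 \<Longrightarrow> w \<in> ball 0 1 \<Longrightarrow> (\<lambda>k. taylor_coeff f k * w ^ k) sums f w"
  using holomorphic_power_series[of f 0 1 w] unfolding H2_def taylor_coeff_def by simp

lemma H2_norm_cong:
  assumes "\<forall>z\<in>ball 0 1. f z = g z"
  shows "H2_norm f = H2_norm g"
  unfolding H2_norm_def using taylor_coeff_cong[OF assms] by simp

lemma H2_norm_squared: "f \<in> H2 \<Longrightarrow> (H2_norm f)\<^sup>2 = (\<Sum>k. (cmod (taylor_coeff f k))\<^sup>2)"
  unfolding H2_norm_def by (simp add: H2_summable suminf_nonneg)

lemma sums_cmod_add_mult_squared:
  fixes a b :: "nat \<Rightarrow> complex"
  assumes a: "summable (\<lambda>k. (cmod (a k))\<^sup>2)" and b: "summable (\<lambda>k. (cmod (b k))\<^sup>2)"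
  shows "(\<lambda>k. (cmod (a k + c * b k))\<^sup>2) sums
           ((\<Sum>k. (cmod (a k))\<^sup>2) + (cmod c)\<^sup>2 * (\<Sum>k. (cmod (b k))\<^sup>2)
            + 2 * Re (cnj c * (\<Sum>k. a k * cnj (b k))))"
proof -
  have "summable (\<lambda>k. a k * cnj (b k))"
    by (rule summable_comparison_test'[OF summable_add[OF a b], of 0]) (simp add: cmod_mult_cnj_le)
  then have "(\<lambda>k. 2 * Re (cnj c * (a k * cnj (b k)))) sums (2 * Re (cnj c * (\<Sum>k. a k * cnj (b k))))"
    by (intro sums_mult sums_Re summable_sums)
  from sums_add[OF sums_add[OF summable_sums[OF a] sums_mult[OF summable_sums[OF b]]] this]
  show ?thesis
    by (simp add: cmod_add_mult_squared)
qed

lemma H2_norm_add_mult_squared: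
  assumes f: "f \<in> H2" and g: "g \<in> H2"
  shows "(H2_norm (\<lambda>z. f z + c * g z))\<^sup>2 =
           (H2_norm f)\<^sup>2 + (cmod c)\<^sup>2 * (H2_norm g)\<^sup>2 + 2 * Re (cnj c * H2_inner f g)"
proof -
  let ?a = "taylor_coeff f" and ?b = "taylor_coeff g"
  have sums: "(\<lambda>k. (cmod (?a k + c * ?b k))\<^sup>2) sums
                ((H2_norm f)\<^sup>2 + (cmod c)\<^sup>2 * (H2_norm g)\<^sup>2 + 2 * Re (cnj c * H2_inner f g))"
    using sums_cmod_add_mult_squared[OF H2_summable[OF f] H2_summable[OF g], of c]
    unfolding H2_norm_squared[OF f] H2_norm_squared[OF g] H2_inner_def .
  have "(H2_norm (\<lambda>z. f z + c * g z))\<^sup>2 = (\<Sum>k. (cmod (?a k + c * ?b k))\<^sup>2)"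
    unfolding H2_norm_def taylor_coeff_add_mult[OF H2_holomorphic[OF f] H2_holomorphic[OF g]]
    using suminf_nonneg[OF sums_summable[OF sums]] by simp
  also have "\<dots> = (H2_norm f)\<^sup>2 + (cmod c)\<^sup>2 * (H2_norm g)\<^sup>2 + 2 * Re (cnj c * H2_inner f g)"
    using sums by (rule sums_unique[symmetric])
  finally show ?thesis .
qed

section \<open>The Sarason transform\<close>

lemma taylor_coeff_cmult_kernel: "taylor_coeff (\<lambda>z. c * kernel \<alpha> z) k = c * cnj \<alpha> ^ k"
proof -
  have "(\<lambda>z. c * kernel \<alpha> z) has_fps_expansion Abs_fps (\<lambda>k. c * cnj \<alpha> ^ k)"
  proof (rule has_fps_expansionI)
    have "\<forall>\<^sub>F z in nhds 0. z \<in> ball 0 (1 / (norm \<alpha> + 1))"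
      by (intro eventually_nhds_in_open) (auto intro: add_nonneg_pos)
    then show "\<forall>\<^sub>F z in nhds 0. (\<lambda>k. fps_nth (Abs_fps (\<lambda>k. c * cnj \<alpha> ^ k)) k * z ^ k) sums (c * kernel \<alpha> z)"
    proof eventually_elim
      case (elim z)
      have "norm z \<le> 1 / (norm \<alpha> + 1)"
        using elim by simp
      then have "norm (cnj \<alpha> * z) \<le> norm \<alpha> * (1 / (norm \<alpha> + 1))"
        unfolding norm_mult complex_mod_cnj by (rule mult_left_mono) simp
      also have "\<dots> < 1"
        by (simp add: divide_less_eq add_nonneg_pos)
      finally have "(\<lambda>k. (cnj \<alpha> * z) ^ k) sums kernel \<alpha> z"
        unfolding kernel_def by (rule geometric_sums)
      then show ?case
        using sums_mult[of _ _ c] by (simp add: power_mult_distrib mult.assoc)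
    qed
  qed
  from fps_nth_fps_expansion[OF this, of k] show ?thesis
    unfolding taylor_coeff_def by simp
qed

lemma is_sarasonD:
  fixes U :: "(real \<Rightarrow> complex) \<Rightarrow> complex \<Rightarrow> complex"
  assumes "is_sarason U"
  shows is_sarason_H2: "g \<in> L2 \<Longrightarrow> U g \<in> H2"
    and is_sarason_add: "g \<in> L2 \<Longrightarrow> h \<in> L2 \<Longrightarrow> z \<in> ball 0 1 \<Longrightarrow> U (\<lambda>x. g x + h x) z = U g z + U h z"
    and is_sarason_cmult: "g \<in> L2 \<Longrightarrow> z \<in> ball 0 1 \<Longrightarrow> U (\<lambda>x. c * g x) z = c * U g z"
    and is_sarason_isometric: "g \<in> L2 \<Longrightarrow> H2_norm (U g) = L2_norm g"
    and is_sarason_power: "z \<in> ball 0 1 \<Longrightarrow>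
          U (\<lambda>x. complex_of_real x ^ n) z = (1 / of_nat (n + 1)) * kernel (of_nat n / of_nat (n + 1)) z"
  using assms unfolding is_sarason_def by blast+

lemma is_sarason_add_mult:
  fixes U :: "(real \<Rightarrow> complex) \<Rightarrow> complex \<Rightarrow> complex"
  assumes "is_sarason U" and "g \<in> L2" and "h \<in> L2" and "z \<in> ball 0 1"
  shows "U (\<lambda>x. g x + c * h x) z = U g z + c * U h z"
  using assms is_sarason_add[OF assms(1,2) L2_cmult] is_sarason_cmult by simp

lemma is_sarason_inner:
  fixes U :: "(real \<Rightarrow> complex) \<Rightarrow> complex \<Rightarrow> complex"
  assumes U: "is_sarason U" and g: "g \<in> L2" and h: "h \<in> L2"
  shows "L2_inner g h = H2_inner (U g) (U h)"
proof (rule complex_eqI_Re_cnj_mult)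
  (* Polarization: the isometry applied to g + c h, for every c, recovers the inner product. *)
  fix c
  have "(L2_norm (\<lambda>x. g x + c * h x))\<^sup>2 = (H2_norm (U (\<lambda>x. g x + c * h x)))\<^sup>2"
    using is_sarason_isometric[OF U L2_add_mult[OF g h]] by simp
  also have "\<dots> = (H2_norm (\<lambda>z. U g z + c * U h z))\<^sup>2"
    using is_sarason_add_mult[OF U g h] by (subst H2_norm_cong) auto
  finally show "Re (cnj c * L2_inner g h) = Re (cnj c * H2_inner (U g) (U h))"
    using L2_norm_add_mult_squared[OF g h, of c]
          H2_norm_add_mult_squared[OF is_sarason_H2[OF U g] is_sarason_H2[OF U h], of c]
    by (simp add: is_sarason_isometric[OF U g] is_sarason_isometric[OF U h])
qed

lemma of_real_div_Suc_mem_ball_0: "complex_of_real (n / Suc n) \<in> ball 0 1"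
  unfolding mem_ball_0 norm_of_real by simp

lemma is_sarason_moment:
  fixes U :: "(real \<Rightarrow> complex) \<Rightarrow> complex \<Rightarrow> complex"
  assumes U: "is_sarason U" and g: "g \<in> L2"
  shows "(LINT x:{0..1}|lborel. g x * of_real x ^ n) = U g (of_real (n / Suc n)) / Suc n"
proof -
  define a where "a = complex_of_real (n / Suc n)"
  have "a \<in> ball 0 1"
    unfolding a_def by (rule of_real_div_Suc_mem_ball_0)
  have "taylor_coeff (U (\<lambda>x. of_real x ^ n)) k = a ^ k / Suc n" for k
  proof -
    have "taylor_coeff (U (\<lambda>x. of_real x ^ n)) k = taylor_coeff (\<lambda>z. 1 / Suc n * kernel a z) k"
      using is_sarason_power[OF U] by (intro taylor_coeff_cong) (simp add: a_def)
    also have "\<dots> = 1 / Suc n * cnj a ^ k"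
      by (rule taylor_coeff_cmult_kernel)
    finally show ?thesis
      by (simp add: a_def)
  qed
  then have "(LINT x:{0..1}|lborel. g x * of_real x ^ n) = (\<Sum>k. taylor_coeff (U g) k * a ^ k / Suc n)"
    using is_sarason_inner[OF U g L2_power[of n]]
    by (simp add: L2_inner_def H2_inner_def a_def)
  also have "\<dots> = U g a / Suc n"
    using sums_divide[OF H2_sums[OF is_sarason_H2[OF U g] \<open>a \<in> ball 0 1\<close>]] by (rule sums_unique[symmetric])
  finally show ?thesis
    by (simp add: a_def)
qed

section \<open>The logarithmic series\<close>

lemma set_integral_suminf:
  fixes f :: "nat \<Rightarrow> 'a \<Rightarrow> 'b::{banach, second_countable_topology}"
  assumes integrable: "\<And>i. set_integrable M A (f i)"
    and summable: "AE x in M. x \<in> A \<longrightarrow> summable (\<lambda>i. norm (f i x))"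
    and summable_integrals: "summable (\<lambda>i. LINT x:A|M. norm (f i x))"
  shows set_integrable_suminf: "set_integrable M A (\<lambda>x. \<Sum>i. f i x)"
    and sums_set_integral: "(\<lambda>i. LINT x:A|M. f i x) sums (LINT x:A|M. (\<Sum>i. f i x))"
proof -
  let ?g = "\<lambda>i x. indicator A x *\<^sub>R f i x"
  have g: "\<And>i. integrable M (?g i)"
    using integrable unfolding set_integrable_def .
  have summable_g: "AE x in M. summable (\<lambda>i. norm (?g i x))"
    using summable by eventually_elim (simp add: indicator_def)
  have summable_integrals_g: "summable (\<lambda>i. \<integral>x. norm (?g i x) \<partial>M)"
    using summable_integrals unfolding set_lebesgue_integral_def by simp
  have suminf_g: "(\<lambda>x. \<Sum>i. ?g i x) = (\<lambda>x. indicator A x *\<^sub>R (\<Sum>i. f i x))"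
  proof
    show "(\<Sum>i. ?g i x) = indicator A x *\<^sub>R (\<Sum>i. f i x)" for x
      by (cases "x \<in> A") simp_all
  qed
  from integrable_suminf[OF g summable_g summable_integrals_g]
  show "set_integrable M A (\<lambda>x. \<Sum>i. f i x)"
    unfolding set_integrable_def suminf_g .
  from sums_integral[OF g summable_g summable_integrals_g]
  show "(\<lambda>i. LINT x:A|M. f i x) sums (LINT x:A|M. (\<Sum>i. f i x))"
    unfolding set_lebesgue_integral_def suminf_g .
qed

lemma Cauchy_inequality_uniform:
  assumes F: "F holomorphic_on ball z r" and "0 < \<rho>" and "\<rho> < r"
  obtains B where "\<And>j. norm ((deriv ^^ j) F z) \<le> fact j * B / \<rho> ^ j"
proof -
  have "cball z \<rho> \<subseteq> ball z r"
    using \<open>\<rho> < r\<close> by auto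
  then have F_hol: "F holomorphic_on ball z \<rho>" and F_cont: "continuous_on (cball z \<rho>) F"
    using holomorphic_on_subset[OF F] continuous_on_subset[OF holomorphic_on_imp_continuous_on[OF F]]
          ball_subset_cball[of z \<rho>] by blast+
  obtain B where B: "\<forall>w\<in>cball z \<rho>. norm (F w) \<le> B"
    using compact_imp_bounded[OF compact_continuous_image[OF F_cont compact_cball]]
    unfolding bounded_iff by blast
  have "norm (F w) \<le> B" if "norm (z - w) = \<rho>" for w
  proof -
    have "w \<in> cball z \<rho>"
      using that by (simp add: dist_norm)
    with B show ?thesis
      by blast
  qed
  from Cauchy_inequality[OF F_hol F_cont \<open>0 < \<rho>\<close> this] show ?thesis
    by (rule that)
qed

lemma summable_norm_higher_deriv_series:
  assumes "F holomorphic_on ball z r" and "0 \<le> s" and "s < r"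
  shows "summable (\<lambda>j. norm ((deriv ^^ j) F z) / fact j * s ^ j)"
proof -
  define \<rho> where "\<rho> = (s + r) / 2"
  have "0 < \<rho>" "\<rho> < r" "s / \<rho> < 1"
    using assms by (auto simp: \<rho>_def field_simps)
  then obtain B where B: "\<And>j. norm ((deriv ^^ j) F z) \<le> fact j * B / \<rho> ^ j"
    using Cauchy_inequality_uniform[OF assms(1)] by metis
  have "summable (\<lambda>j. B * (s / \<rho>) ^ j)"
    using \<open>s / \<rho> < 1\<close> \<open>0 < \<rho>\<close> assms(2) by (intro summable_mult summable_geometric) simp
  moreover have "norm (norm ((deriv ^^ j) F z) / fact j * s ^ j) \<le> B * (s / \<rho>) ^ j" for j
  proof -
    have "norm (norm ((deriv ^^ j) F z) / fact j * s ^ j) = norm ((deriv ^^ j) F z) / fact j * s ^ j"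
      using assms(2) by simp
    also have "\<dots> \<le> (fact j * B / \<rho> ^ j) / fact j * s ^ j"
      using assms(2) by (intro mult_right_mono divide_right_mono B) auto
    finally show ?thesis
      by (simp add: power_divide)
  qed
  ultimately show ?thesis
    by (rule summable_comparison_test'[where N=0])
qed

definition log_series :: "(complex \<Rightarrow> complex) \<Rightarrow> real \<Rightarrow> complex" where
  "log_series F x = (\<Sum>j. (deriv ^^ j) F 1 * complex_of_real (ln x ^ j / (fact j)\<^sup>2))"

lemma log_series_summable:
  assumes "F holomorphic_on ball 1 r" and "r > 0"
  shows "summable (\<lambda>j. norm ((deriv ^^ j) F 1 * complex_of_real (ln x ^ j / (fact j)\<^sup>2)))"
proof -
  obtain B where B: "\<And>j. norm ((deriv ^^ j) F 1) \<le> fact j * B / (r / 2) ^ j"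
    using Cauchy_inequality_uniform[OF assms(1), of "r / 2"] \<open>r > 0\<close> by auto
  have "norm ((deriv ^^ j) F 1 * complex_of_real (ln x ^ j / (fact j)\<^sup>2))
          \<le> B * (inverse (fact j) * (2 * \<bar>ln x\<bar> / r) ^ j)" for j
  proof -
    have "norm ((deriv ^^ j) F 1 * complex_of_real (ln x ^ j / (fact j)\<^sup>2))
            = norm ((deriv ^^ j) F 1) * (\<bar>ln x\<bar> ^ j / (fact j)\<^sup>2)"
      by (simp add: norm_mult norm_divide norm_power power_abs)
    also have "\<dots> \<le> (fact j * B / (r / 2) ^ j) * (\<bar>ln x\<bar> ^ j / (fact j)\<^sup>2)"
      by (rule mult_right_mono[OF B]) simp
    also have "\<dots> = B * (inverse (fact j) * (2 * \<bar>ln x\<bar> / r) ^ j)"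
      by (simp add: power2_eq_square power_divide field_simps)
    finally show ?thesis .
  qed
  then show ?thesis
    by (intro summable_comparison_test'[OF summable_mult[OF summable_exp], of 0]) auto
qed

lemma log_series_sums:
  assumes "F holomorphic_on ball 1 r" and "r > 0"
  shows "(\<lambda>j. (deriv ^^ j) F 1 * complex_of_real (ln x ^ j / (fact j)\<^sup>2)) sums log_series F x"
  unfolding log_series_def
  by (rule summable_sums[OF summable_norm_cancel[OF log_series_summable[OF assms]]])

lemma ln_power_mult_power_moment_scaled:
  fixes a :: complex
  shows set_integrable_ln_power_mult_power_scaled:
      "set_integrable lborel {0..1} (\<lambda>x. a * of_real (ln x ^ j * x ^ n))"
    and set_integral_ln_power_mult_power_scaled:
      "(LINT x:{0..1}|lborel. a * of_real (ln x ^ j * x ^ n)) = a * (- 1) ^ j * fact j / of_nat (Suc n) ^ Suc j"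
    and set_integral_norm_ln_power_mult_power_scaled:
      "(LINT x:{0..1}|lborel. norm (a * of_real (ln x ^ j * x ^ n))) = norm a * fact j / real (Suc n) ^ Suc j"
proof -
  have "integrable lborel (\<lambda>x. complex_of_real (indicator {0..1} x *\<^sub>R (ln x ^ j * x ^ n)))"
    using set_integrable_ln_power_mult_power[of j n] unfolding set_integrable_def by (rule integrable_of_real)
  then have "set_integrable lborel {0..1} (\<lambda>x. complex_of_real (ln x ^ j * x ^ n))"
    unfolding set_integrable_def by (simp add: scaleR_conv_of_real)
  then show "set_integrable lborel {0..1} (\<lambda>x. a * of_real (ln x ^ j * x ^ n))"
    by (rule set_integrable_mult_right)
  show "(LINT x:{0..1}|lborel. a * of_real (ln x ^ j * x ^ n)) = a * (- 1) ^ j * fact j / of_nat (Suc n) ^ Suc j"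
    unfolding set_integral_mult_right set_integral_complex_of_real set_integral_ln_power_mult_power
    by simp
  have "norm (a * of_real (ln x ^ j * x ^ n)) = norm a * (x ^ n * (- ln x) ^ j)" if "x \<in> {0..1}" for x
  proof -
    have "\<bar>ln x\<bar> = - ln x"
      using that by (cases "x = 0") (auto simp: ln_le_zero_iff)
    with that show ?thesis
      by (simp add: norm_mult norm_power abs_mult power_abs)
  qed
  then have "(LINT x:{0..1}|lborel. norm (a * of_real (ln x ^ j * x ^ n))) =
      (LINT x:{0..1}|lborel. norm a * (x ^ n * (- ln x) ^ j))"
    by (intro set_lebesgue_integral_cong) auto
  then show "(LINT x:{0..1}|lborel. norm (a * of_real (ln x ^ j * x ^ n))) = norm a * fact j / real (Suc n) ^ Suc j"
    by (simp add: set_integral_log_moment)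
qed

lemma of_real_div_Suc_minus_1: "complex_of_real (n / Suc n) - 1 = - (1 / of_nat (Suc n))"
proof -
  have "real n / real (Suc n) - 1 = - (1 / real (Suc n))"
    by (simp add: field_simps)
  from arg_cong[OF this, of complex_of_real] show ?thesis
    by simp
qed

lemma dist_1_of_real_div_Suc: "dist 1 (complex_of_real (n / Suc n)) = 1 / Suc n"
proof -
  have "dist 1 (complex_of_real (n / Suc n)) = norm (complex_of_real (n / Suc n) - 1)"
    by (simp add: dist_norm norm_minus_commute)
  also have "\<dots> = 1 / Suc n"
    unfolding of_real_div_Suc_minus_1 by (simp only: norm_minus_cancel norm_divide norm_one norm_of_nat)
  finally show ?thesis .
qed

lemma log_series_term_integrals:
  fixes F :: "complex \<Rightarrow> complex"
  assumes F: "F holomorphic_on ball 1 r" and n: "1 / Suc n < r"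
  defines "T \<equiv> \<lambda>j x. (deriv ^^ j) F 1 / (fact j)\<^sup>2 * of_real (ln x ^ j * x ^ n)"
  shows "summable (\<lambda>j. LINT x:{0..1}|lborel. norm (T j x))"
    and "(\<lambda>j. LINT x:{0..1}|lborel. T j x) sums (F (of_real (n / Suc n)) / Suc n)"
proof -
  have "(LINT x:{0..1}|lborel. norm (T j x)) = norm ((deriv ^^ j) F 1) / fact j * (1 / Suc n) ^ j / Suc n"
    for j
    unfolding T_def set_integral_norm_ln_power_mult_power_scaled
    by (simp add: norm_mult norm_divide norm_power norm_fact power2_eq_square power_divide field_simps)
  then show "summable (\<lambda>j. LINT x:{0..1}|lborel. norm (T j x))"
    using summable_divide[OF summable_norm_higher_deriv_series[OF F _ n], of "Suc n"] by simp
  have "(LINT x:{0..1}|lborel. T j x) = (deriv ^^ j) F 1 / fact j * (of_real (n / Suc n) - 1) ^ j / Suc n"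
    for j
  proof -
    have "(1 + of_nat n :: complex) \<noteq> 0"
      by (metis of_nat_Suc of_nat_eq_0_iff nat.distinct(1))
    then show ?thesis
      unfolding T_def set_integral_ln_power_mult_power_scaled of_real_div_Suc_minus_1
      by (simp add: power2_eq_square power_divide power_minus' field_simps)
  qed
  moreover have "complex_of_real (n / Suc n) \<in> ball 1 r"
    using n by (simp only: mem_ball dist_1_of_real_div_Suc)
  ultimately show "(\<lambda>j. LINT x:{0..1}|lborel. T j x) sums (F (of_real (n / Suc n)) / Suc n)"
    using sums_divide[OF holomorphic_power_series[OF F], of _ "Suc n"] by simp
qed

lemma log_series_moment:
  fixes F :: "complex \<Rightarrow> complex"
  assumes F: "F holomorphic_on ball 1 r" and n: "1 / Suc n < r"
  shows set_integrable_log_series_moment: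
      "set_integrable lborel {0..1} (\<lambda>x. log_series F x * of_real x ^ n)"
    and set_integral_log_series_moment:
      "(LINT x:{0..1}|lborel. log_series F x * of_real x ^ n) = F (of_real (n / Suc n)) / Suc n"
proof -
  have "r > 0"
    using n by (smt (verit) divide_pos_pos of_nat_0_less_iff zero_less_Suc zero_less_one)
  define T where "T j x = (deriv ^^ j) F 1 / (fact j)\<^sup>2 * of_real (ln x ^ j * x ^ n)" for j and x :: real
  have term_eq: "(deriv ^^ j) F 1 * of_real (ln x ^ j / (fact j)\<^sup>2) * of_real x ^ n = T j x" for j x
    by (simp add: T_def)
  have "summable (\<lambda>j. norm (T j x))" for x
  proof -
    have "norm (T j x) = norm ((deriv ^^ j) F 1 * of_real (ln x ^ j / (fact j)\<^sup>2)) * norm (of_real x ^ n :: complex)"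
      for j
      unfolding term_eq[symmetric] by (rule norm_mult)
    then show ?thesis
      by (simp only:) (rule summable_mult2[OF log_series_summable[OF F \<open>r > 0\<close>]])
  qed
  then have "AE x in lborel. x \<in> {0..1} \<longrightarrow> summable (\<lambda>j. norm (T j x))"
    by simp
  note summable_norm_AE = this
  have T_integrable: "set_integrable lborel {0..1} (T j)" for j
    unfolding T_def by (rule set_integrable_ln_power_mult_power_scaled)
  note T_integrals = log_series_term_integrals[OF F n, folded T_def]
  have "(\<lambda>j. T j x) sums (log_series F x * of_real x ^ n)" for x
    unfolding term_eq[symmetric] by (rule sums_mult2[OF log_series_sums[OF F \<open>r > 0\<close>]])
  then have suminf_T: "(\<Sum>j. T j x) = log_series F x * of_real x ^ n" for x
    by (rule sums_unique[symmetric])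
  show "set_integrable lborel {0..1} (\<lambda>x. log_series F x * of_real x ^ n)"
    using set_integrable_suminf[OF T_integrable summable_norm_AE T_integrals(1)] unfolding suminf_T .
  show "(LINT x:{0..1}|lborel. log_series F x * of_real x ^ n) = F (of_real (n / Suc n)) / Suc n"
    using sums_set_integral[OF T_integrable summable_norm_AE T_integrals(1)] T_integrals(2)
    unfolding suminf_T by (rule sums_unique2)
qed

theorem lemma3p4:
  fixes U :: "(real \<Rightarrow> complex) \<Rightarrow> complex \<Rightarrow> complex"
    and f F :: "complex \<Rightarrow> complex" and S :: "complex set" and g :: "real \<Rightarrow> complex"
  assumes "is_sarason U"
    and "f \<in> H2"
    and "open S" and "1 \<in> S" and "F holomorphic_on (ball 0 1 \<union> S)"
    and "\<forall>z\<in>ball 0 1. F z = f z"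
    and "g \<in> L2" and "\<forall>z\<in>ball 0 1. U g z = f z"
  shows "AE x in lborel. x \<in> {0..1} \<longrightarrow>
           (\<lambda>j. (deriv ^^ j) F 1 * complex_of_real ((ln x) ^ j / (fact j)\<^sup>2)) sums g x"
proof -
  obtain r where "r > 0" and "ball 1 r \<subseteq> S"
    using assms(3,4) open_contains_ball by blast
  with assms(5) have F: "F holomorphic_on ball 1 r"
    by (blast intro: holomorphic_on_subset)
  have "\<forall>\<^sub>F n in sequentially. 1 / Suc n < r"
    using order_tendstoD(2)[OF LIMSEQ_Suc[OF lim_1_over_n] \<open>r > 0\<close>] .
  then obtain N where large: "\<And>n. n \<ge> N \<Longrightarrow> 1 / Suc n < r"
    unfolding eventually_sequentially by blast
  have g_power: "set_integrable lborel {0..1} (\<lambda>x. g x * of_real x ^ n)" for n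
    using L2_set_integrable_mult_cnj[OF assms(7) L2_power[of n]] by simp
  have "(LINT x:{0..1}|lborel. (g x - log_series F x) * of_real x ^ n) = 0" if "n \<ge> N" for n
  proof -
    have "(LINT x:{0..1}|lborel. g x * of_real x ^ n) = F (of_real (n / Suc n)) / Suc n"
      using is_sarason_moment[OF assms(1,7), of n] assms(6,8) of_real_div_Suc_mem_ball_0[of n] by simp
    then show ?thesis
      using g_power[of n] set_integrable_log_series_moment[OF F large[OF that]]
            set_integral_log_series_moment[OF F large[OF that]]
      by (simp add: left_diff_distrib)
  qed
  moreover have "set_integrable lborel {0..1} (\<lambda>x. (g x - log_series F x) * of_real x ^ N)"
    using g_power[of N] set_integrable_log_series_moment[OF F large[of N]] by (simp add: left_diff_distrib)
  ultimately have "AE x in lborel. x \<in> {0..1} \<longrightarrow> g x - log_series F x = 0"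
    by (intro AE_eq_0_if_moments_eq_0)
  then show ?thesis
    by eventually_elim (use log_series_sums[OF F \<open>r > 0\<close>] in auto)
qed

end
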